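(* Let $A$ be a finite weighted Büchi automaton (WBA) and $c\in\mathbb{N}$. Then $A$ admits a Büchi accepted $c$-feasible infinite run if and only if $A$ admits a Büchi accepted $c$-feasible lasso, i.e. an infinite run of the form $\gamma_1\gamma_2^\omega$ where $\gamma_1,\gamma_2$ are finite runs, $\gamma_2$ is nonempty and starts and ends in the same state (the last state of $\gamma_1$), and $\gamma_2^\omega$ denotes the infinite repetition of $\gamma_2$.
   Context: A weighted (transition-based, generalized) Büchi automaton (WBA) is a structure $A=(\Sigma,\mathcal{M},S,s_0,T)$ where $\Sigma$ is a finite alphabet, $\mathcal{M}$ is a finite set of colors, $S$ is a set of states with initial state $s_0\in S$, and $T\subseteq S\times\Sigma\times 2^{\mathcal{M}}\times\mathbb{R}\times S$ is a set of transitions; a transition $(s,\ell,M,w,s')$ has letter $\ell$, color set $M$ and weight $w$. $A$ is finite if $S$ and $T$ are finite and $T\subseteq S\times\Sigma\times 2^{\mathcal{M}}\times\mathbb{Z}\times S$ (integer weights). A run is a finite or infinite sequence of transitions $s_1\to s_2\to\cdots$ in which each transition starts in the state where the previous one ends. A weak upper bound $b\in\mathbb{N}$ is fixed throughout. For an initial credit $c$ and a run $s_1\xrightarrow{w_1}s_2\xrightarrow{w_2}\cdots$, the accumulated weights are $e_1=\min(b,c)$ and $e_{i+1}=\min(b,e_i+w_i)$; the run is $c$-feasible (i.e. $(c,b)$-feasible) if $e_i\ge 0$ for all $i$. An infinite run $s_1\to_{M_1}s_2\to_{M_2}\cdots$ is Büchi accepted if every color $m\in\mathcal{M}$ lies in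 $M_j$ for infinitely many $j$. *)

theory Defs
  imports Main
begin

type_synonym ('s,'l,'m) trans = "'s \<times> 'l \<times> 'm set \<times> int \<times> 's"

record ('s,'l,'m) wba =
  alph   :: "'l set"
  colors :: "'m set"
  states :: "'s set"
  init   :: "'s"
  trans  :: "('s,'l,'m) trans set"

definition src :: "('s,'l,'m) trans \<Rightarrow> 's" where
  "src t = fst t"
definition lbl :: "('s,'l,'m) trans \<Rightarrow> 'l" where
  "lbl t = fst (snd t)"
definition col :: "('s,'l,'m) trans \<Rightarrow> 'm set" where
  "col t = fst (snd (snd t))"
definition wt :: "('s,'l,'m) trans \<Rightarrow> int" where
  "wt t = fst (snd (snd (snd t)))"
definition tgt :: "('s,'l,'m) trans \<Rightarrow> 's" where
  "tgt t = snd (snd (snd (snd t)))"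

definition finite_wba :: "('s,'l,'m) wba \<Rightarrow> bool" where
  "finite_wba A \<longleftrightarrow> finite (alph A) \<and> finite (colors A) \<and> finite (states A) \<and>
     init A \<in> states A \<and> finite (trans A) \<and>
     trans A \<subseteq> states A \<times> alph A \<times> Pow (colors A) \<times> (UNIV::int set) \<times> states A"

definition inf_run :: "('s,'l,'m) wba \<Rightarrow> (nat \<Rightarrow> ('s,'l,'m) trans) \<Rightarrow> bool" where
  "inf_run A r \<longleftrightarrow> (\<forall>i. r i \<in> trans A) \<and> (\<forall>i. tgt (r i) = src (r (Suc i)))"

definition fin_run :: "('s,'l,'m) wba \<Rightarrow> ('s,'l,'m) trans list \<Rightarrow> bool" where
  "fin_run A g \<longleftrightarrow> set g \<subseteq> trans A \<and> (\<forall>i. Suc i < length g \<longrightarrow> tgt (g!i) = src (g!Suc i))"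

text \<open>Accumulated weights with weak upper bound b and initial credit c:
  e_1 = min b c, e_{i+1} = min b (e_i + w_i) (indices shifted to start at 0).\<close>
fun acc :: "nat \<Rightarrow> nat \<Rightarrow> (nat \<Rightarrow> ('s,'l,'m) trans) \<Rightarrow> nat \<Rightarrow> int" where
  "acc b c r 0 = min (int b) (int c)"
| "acc b c r (Suc i) = min (int b) (acc b c r i + wt (r i))"

definition feasible :: "nat \<Rightarrow> nat \<Rightarrow> (nat \<Rightarrow> ('s,'l,'m) trans) \<Rightarrow> bool" where
  "feasible b c r \<longleftrightarrow> (\<forall>i. acc b c r i \<ge> 0)"

definition buchi_acc :: "('s,'l,'m) wba \<Rightarrow> (nat \<Rightarrow> ('s,'l,'m) trans) \<Rightarrow> bool" where
  "buchi_acc A r \<longleftrightarrow> (\<forall>m \<in> colors A. \<exists>\<^sub>\<infinity> j. m \<in> col (r j))"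

definition lasso :: "('s,'l,'m) trans list \<Rightarrow> ('s,'l,'m) trans list \<Rightarrow> nat \<Rightarrow> ('s,'l,'m) trans" where
  "lasso g1 g2 i = (if i < length g1 then g1 ! i else g2 ! ((i - length g1) mod length g2))"

definition is_lasso :: "('s,'l,'m) wba \<Rightarrow> ('s,'l,'m) trans list \<Rightarrow> ('s,'l,'m) trans list \<Rightarrow> bool" where
  "is_lasso A g1 g2 \<longleftrightarrow> fin_run A g1 \<and> fin_run A g2 \<and> g2 \<noteq> [] \<and>
     src (hd g2) = tgt (last g2) \<and> (g1 \<noteq> [] \<longrightarrow> tgt (last g1) = src (hd g2))"

end

theory Submission
  imports Defs "HOL-Library.Infinite_Set"
begin

text \<open>Along an accepted feasible run r the pairs (r n, credit at n) range over the finite set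
  trans A \<times> {0..b}, so some pair recurs infinitely often. Take an occurrence i of it, wait
  until every colour has occurred after i, and take a later occurrence j. Folding the run back
  from j to i gives the lasso with stem r[0,i) and cycle r[i,j): it is a run because r i and
  r j leave the same state, it is feasible because the credit evolves deterministically and is
  the same at i and j, and it is accepted because r[i,j) contains every colour.\<close>

lemma acc_le_bound: "acc b c r n \<le> int b"
  by (cases n) auto

definition fold_back :: "nat \<Rightarrow> nat \<Rightarrow> nat \<Rightarrow> nat" where
  "fold_back i j n = (if n < i then n else i + (n - i) mod (j - i))"

lemma fold_back_0: "fold_back i j 0 = 0"
  by (simp add: fold_back_def)

lemma fold_back_Suc:
  assumes "i < j"
  shows "fold_back i j (Suc n) =
    (if Suc (fold_back i j n) = j then i else Suc (fold_back i j n))"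
proof (cases "n < i")
  case True
  then show ?thesis using assms by (auto simp: fold_back_def)
next
  case False
  then have "Suc n - i = Suc (n - i)" by simp
  moreover have "(n - i) mod (j - i) < j - i" using assms by simp
  ultimately show ?thesis using False assms by (auto simp: fold_back_def mod_Suc)
qed

lemma fold_back_periodic:
  assumes "i \<le> q" "q < j"
  shows "fold_back i j (q + k * (j - i)) = q"
proof -
  have "q + k * (j - i) - i = (q - i) + k * (j - i)" using assms(1) by simp
  moreover have "q - i < j - i" using assms by simp
  ultimately have "(q + k * (j - i) - i) mod (j - i) = q - i" by simp
  then show ?thesis using assms(1) by (simp add: fold_back_def)
qed

lemma acc_fold_back:
  assumes "i < j" and "acc b c r i = acc b c r j"
  shows "acc b c (r \<circ> fold_back i j) n = acc b c r (fold_back i j n)"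
proof (induction n)
  case 0
  show ?case by (simp add: fold_back_0)
next
  case (Suc n)
  then have "acc b c (r \<circ> fold_back i j) (Suc n) = acc b c r (Suc (fold_back i j n))"
    by (simp add: comp_def)
  also have "\<dots> = acc b c r (fold_back i j (Suc n))"
    using assms
    by (cases "Suc (fold_back i j n) = j") (simp_all add: fold_back_Suc del: acc.simps)
  finally show ?case .
qed

lemma feasible_fold_back:
  assumes "feasible b c r" "i < j" "acc b c r i = acc b c r j"
  shows "feasible b c (r \<circ> fold_back i j)"
  using assms(1) unfolding feasible_def acc_fold_back[OF assms(2,3)] by blast

definition covers_colours ::
  "('s,'l,'m) wba \<Rightarrow> (nat \<Rightarrow> ('s,'l,'m) trans) \<Rightarrow> nat \<Rightarrow> nat \<Rightarrow> bool" where
  "covers_colours A r i j \<longleftrightarrow> (\<forall>m \<in> colors A. \<exists>q. i \<le> q \<and> q < j \<and> m \<in> col (r q))"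

lemma covers_colours_mono:
  "covers_colours A r i j \<Longrightarrow> j \<le> j' \<Longrightarrow> covers_colours A r i j'"
  unfolding covers_colours_def by (meson order_less_le_trans)

lemma buchi_acc_covers_coloursE:
  assumes "finite (colors A)" and "buchi_acc A r"
  obtains M where "covers_colours A r n M"
proof -
  have "\<forall>m \<in> colors A. \<exists>q \<ge> n. m \<in> col (r q)"
    using assms(2) unfolding buchi_acc_def INFM_nat_le by blast
  then obtain q where q: "\<And>m. m \<in> colors A \<Longrightarrow> n \<le> q m \<and> m \<in> col (r (q m))"
    by metis
  have "q m < Suc (Max (q ` colors A))" if "m \<in> colors A" for m
    using assms(1) that by (simp add: le_imp_less_Suc)
  then have "covers_colours A r n (Suc (Max (q ` colors A)))"
    unfolding covers_colours_def using q by blast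
  then show thesis by (rule that)
qed

lemma buchi_acc_fold_back:
  assumes "i < j" and "covers_colours A r i j"
  shows "buchi_acc A (r \<circ> fold_back i j)"
  unfolding buchi_acc_def INFM_nat_le
proof (intro ballI allI)
  fix m k assume "m \<in> colors A"
  then obtain q where q: "i \<le> q" "q < j" "m \<in> col (r q)"
    using assms(2) unfolding covers_colours_def by blast
  have "k \<le> k * (j - i)" using assms(1) by auto
  then have "k \<le> q + k * (j - i)" by (rule trans_le_add2)
  moreover have "(r \<circ> fold_back i j) (q + k * (j - i)) = r q"
    using q fold_back_periodic by simp
  ultimately show "\<exists>n \<ge> k. m \<in> col ((r \<circ> fold_back i j) n)" using q(3) by auto
qed

lemma lasso_upt_eq_fold_back:
  assumes "i < j"
  shows "lasso (map r [0..<i]) (map r [i..<j]) = r \<circ> fold_back i j"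
proof
  fix n
  have "(n - i) mod (j - i) < j - i" using assms by simp
  then show "lasso (map r [0..<i]) (map r [i..<j]) n = (r \<circ> fold_back i j) n"
    by (simp add: lasso_def fold_back_def)
qed

lemma is_lasso_upt:
  assumes run: "inf_run A r" and "i < j" and "src (r i) = src (r j)"
  shows "is_lasso A (map r [0..<i]) (map r [i..<j])"
proof -
  have step: "tgt (r n) = src (r (Suc n))" for n
    using run unfolding inf_run_def by blast
  have segment: "fin_run A (map r [k..<l])" for k l
    using run unfolding fin_run_def inf_run_def by (simp add: image_subset_iff)
  have hd: "hd (map r [i..<j]) = r i"
    using assms(2) by (simp add: upt_conv_Cons)
  have "last (map r [i..<j]) = r (j - 1)"
    using assms(2) by (simp add: last_map)
  then have cycle: "src (hd (map r [i..<j])) = tgt (last (map r [i..<j]))"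
    using hd step[of "j - 1"] assms(2,3) by simp
  have stem: "tgt (last (map r [0..<i])) = src (hd (map r [i..<j]))" if "i > 0"
    using that hd step[of "i - 1"] by (simp add: last_map)
  show ?thesis
    unfolding is_lasso_def using segment cycle stem assms(2) by simp
qed

lemma fin_run_cycle_step:
  assumes "fin_run A g" "g \<noteq> []" "src (hd g) = tgt (last g)"
  shows "tgt (g ! (k mod length g)) = src (g ! (Suc k mod length g))"
proof (cases "Suc (k mod length g) = length g")
  case True
  then have "k mod length g = length g - 1" and "Suc k mod length g = 0"
    by (simp_all add: mod_Suc)
  with assms(2,3) show ?thesis by (simp add: last_conv_nth hd_conv_nth)
next
  case False
  moreover have "k mod length g < length g" using assms(2) by simp
  ultimately show ?thesis using assms(1) by (simp add: fin_run_def mod_Suc)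
qed

lemma lasso_inf_run:
  assumes "is_lasso A g1 g2"
  shows "inf_run A (lasso g1 g2)"
proof -
  have g1: "fin_run A g1" and g2: "fin_run A g2" and "g2 \<noteq> []"
    and cycle: "src (hd g2) = tgt (last g2)"
    and stem: "g1 \<noteq> [] \<Longrightarrow> tgt (last g1) = src (hd g2)"
    using assms unfolding is_lasso_def by auto
  have in_cycle: "lasso g1 g2 n = g2 ! ((n - length g1) mod length g2)"
    if "length g1 \<le> n" for n
    using that by (simp add: lasso_def)
  have "lasso g1 g2 n \<in> set g1 \<union> set g2" for n
    using \<open>g2 \<noteq> []\<close> by (simp add: lasso_def)
  then have "lasso g1 g2 n \<in> trans A" for n
    using g1 g2 unfolding fin_run_def by blast
  moreover have "tgt (lasso g1 g2 n) = src (lasso g1 g2 (Suc n))" for n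
  proof -
    consider "Suc n < length g1" | "Suc n = length g1" | "length g1 \<le> n" by linarith
    then show ?thesis
    proof cases
      case 1
      moreover have "tgt (g1 ! n) = src (g1 ! Suc n)" using 1 g1 unfolding fin_run_def by blast
      ultimately show ?thesis by (simp add: lasso_def)
    next
      case 2
      then have "g1 \<noteq> []" and "n = length g1 - 1" by auto
      then have "lasso g1 g2 n = last g1" by (simp add: lasso_def last_conv_nth)
      moreover have "lasso g1 g2 (Suc n) = hd g2"
        using 2 \<open>g2 \<noteq> []\<close> by (simp add: lasso_def hd_conv_nth)
      ultimately show ?thesis using stem[OF \<open>g1 \<noteq> []\<close>] by simp
    next
      case 3
      then have "lasso g1 g2 (Suc n) = g2 ! (Suc (n - length g1) mod length g2)"
        using in_cycle[of "Suc n"] by (simp add: Suc_diff_le)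
      then show ?thesis
        using 3 in_cycle[of n] fin_run_cycle_step[OF g2 \<open>g2 \<noteq> []\<close> cycle] by presburger
    qed
  qed
  ultimately show ?thesis unfolding inf_run_def by blast
qed

lemma buchi_feasible_run_loopE:
  assumes "finite_wba A" and "inf_run A r" and "buchi_acc A r" and "feasible b c r"
  obtains i j where "i < j" "r i = r j" "acc b c r i = acc b c r j" "covers_colours A r i j"
proof -
  define key where "key n = (r n, acc b c r n)" for n
  have "range key \<subseteq> trans A \<times> {0..int b}"
    using assms(2,4) acc_le_bound unfolding key_def inf_run_def feasible_def by auto
  moreover have "finite (trans A)" using assms(1) unfolding finite_wba_def by blast
  ultimately have "finite (range key)"
    by (meson finite_SigmaI finite_atLeastAtMost_int finite_subset)
  then obtain i where "infinite {n. key n = key i}"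
    using pigeonhole_infinite[OF infinite_UNIV_nat] by auto
  moreover obtain M where "covers_colours A r i M"
    using assms(1,3) buchi_acc_covers_coloursE unfolding finite_wba_def by metis
  ultimately obtain j where "max M (Suc i) \<le> j" "key j = key i"
    unfolding infinite_nat_iff_unbounded_le by blast
  then have "i < j" "r i = r j" "acc b c r i = acc b c r j" "covers_colours A r i j"
    using covers_colours_mono[OF \<open>covers_colours A r i M\<close>] by (auto simp: key_def)
  then show thesis by (rule that)
qed

theorem lemma2:
  fixes A :: "('s,'l,'m) wba" and b c :: nat
  assumes "finite_wba A"
  shows "(\<exists>r. inf_run A r \<and> buchi_acc A r \<and> feasible b c r) \<longleftrightarrow>
         (\<exists>g1 g2. is_lasso A g1 g2 \<and> buchi_acc A (lasso g1 g2) \<and> feasible b c (lasso g1 g2))"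
proof
  assume "\<exists>r. inf_run A r \<and> buchi_acc A r \<and> feasible b c r"
  then obtain r where r: "inf_run A r" "buchi_acc A r" "feasible b c r" by blast
  then obtain i j where loop: "i < j" "r i = r j" "acc b c r i = acc b c r j"
    "covers_colours A r i j"
    using buchi_feasible_run_loopE[OF assms] by metis
  have "is_lasso A (map r [0..<i]) (map r [i..<j])"
    using is_lasso_upt[OF r(1) loop(1)] loop(2) by simp
  moreover have "lasso (map r [0..<i]) (map r [i..<j]) = r \<circ> fold_back i j"
    using lasso_upt_eq_fold_back loop(1) .
  ultimately show "\<exists>g1 g2. is_lasso A g1 g2 \<and> buchi_acc A (lasso g1 g2) \<and> feasible b c (lasso g1 g2)"
    using buchi_acc_fold_back feasible_fold_back r loop by metis
next
  assume "\<exists>g1 g2. is_lasso A g1 g2 \<and> buchi_acc A (lasso g1 g2) \<and> feasible b c (lasso g1 g2)"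
  then show "\<exists>r. inf_run A r \<and> buchi_acc A r \<and> feasible b c r"
    using lasso_inf_run by blast
qed

end
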